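(* Let $\mathfrak L$ be a complete lattice and $\lambda\in\mathcal O$ a nonzero limit ordinal. (1) If $h:\mathcal O\times\mathcal O\to\mathfrak L$ is antitone in its first argument (i.e. $\alpha\le\alpha'$ implies $h(\alpha',\beta)\sqsubseteq h(\alpha,\beta)$ for all $\beta$), then $\limsup_{\beta\to\lambda}h(\beta,\beta)\sqsubseteq\limsup_{\alpha\to\lambda}\limsup_{\beta\to\lambda}h(\alpha,\beta)$. (2) If $h:\mathcal O\times\mathcal O\to\mathfrak L$ is monotone in its first argument, then $\liminf_{\alpha\to\lambda}\liminf_{\beta\to\lambda}h(\alpha,\beta)\sqsubseteq\liminf_{\beta\to\lambda}h(\beta,\beta)$.
   Context: $\mathcal O$ is the set of ordinals $\le\top_{\mathsf{ord}}$ for a fixed ordinal $\top_{\mathsf{ord}}$ ($=\beth_\omega$). For $f:\mathcal O\to\mathfrak L$ and a nonzero limit $\lambda$: $\liminf_{\alpha\to\lambda}f(\alpha)=\sup_{\alpha_0<\lambda}\inf_{\alpha_0\le\alpha<\lambda}f(\alpha)$, $\limsup_{\alpha\to\lambda}f(\alpha)=\inf_{\alpha_0<\lambda}\sup_{\alpha_0\le\alpha<\lambda}f(\alpha)$. *)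

theory Defs
  imports Main
begin

text \<open>Ordinals are modelled by an arbitrary well-ordered type 'o (class wellorder).
  Limits along a nonzero limit ordinal lam, as in the paper.\<close>

definition is_nonzero_limit :: "'o::wellorder \<Rightarrow> bool" where
  "is_nonzero_limit lam \<longleftrightarrow> (\<exists>a. a < lam) \<and> (\<forall>a<lam. \<exists>b. a < b \<and> b < lam)"

definition ord_liminf :: "'o::wellorder \<Rightarrow> ('o \<Rightarrow> 'l::complete_lattice) \<Rightarrow> 'l" where
  "ord_liminf lam f = (SUP a0\<in>{..<lam}. INF a\<in>{a0..<lam}. f a)"

definition ord_limsup :: "'o::wellorder \<Rightarrow> ('o \<Rightarrow> 'l::complete_lattice) \<Rightarrow> 'l" where
  "ord_limsup lam f = (INF a0\<in>{..<lam}. SUP a\<in>{a0..<lam}. f a)"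

end

theory Submission
  imports Defs
begin

text \<open>For \<open>a\<^sub>0 < \<lambda>\<close>, monotonicity in the first argument compares the diagonal
  \<open>h(\<beta>,\<beta>)\<close> with the row \<open>h(a\<^sub>0,\<beta>)\<close> on the tail \<open>\<beta> \<ge> a\<^sub>0\<close>; since limits only depend on
  tails, the limit of the diagonal is thus bounded by the limit of row \<open>a\<^sub>0\<close>, which lies in the
  \<open>a\<^sub>0\<close>-tail of the outer limit.\<close>

lemma ord_limsup_mono_eventually:
  fixes f g :: "'o::wellorder \<Rightarrow> 'l::complete_lattice"
  assumes "a0 < lam" and le: "\<And>b. a0 \<le> b \<Longrightarrow> b < lam \<Longrightarrow> f b \<le> g b"
  shows "ord_limsup lam f \<le> ord_limsup lam g"
  unfolding ord_limsup_def
proof (rule INF_greatest)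
  fix a1 assume "a1 \<in> {..<lam}"
  then have c: "max a0 a1 \<in> {..<lam}" using \<open>a0 < lam\<close> by auto
  have "(INF a\<in>{..<lam}. SUP b\<in>{a..<lam}. f b) \<le> (SUP b\<in>{max a0 a1..<lam}. f b)"
    by (rule INF_lower[OF c])
  also have "\<dots> \<le> (SUP b\<in>{a1..<lam}. g b)"
    by (rule SUP_mono) (auto intro: le)
  finally show "(INF a\<in>{..<lam}. SUP b\<in>{a..<lam}. f b) \<le> (SUP b\<in>{a1..<lam}. g b)" .
qed

lemma ord_liminf_mono_eventually:
  fixes f g :: "'o::wellorder \<Rightarrow> 'l::complete_lattice"
  assumes "a0 < lam" and le: "\<And>b. a0 \<le> b \<Longrightarrow> b < lam \<Longrightarrow> f b \<le> g b"
  shows "ord_liminf lam f \<le> ord_liminf lam g"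
  unfolding ord_liminf_def
proof (rule SUP_least)
  fix a1 assume "a1 \<in> {..<lam}"
  then have c: "max a0 a1 \<in> {..<lam}" using \<open>a0 < lam\<close> by auto
  have "(INF b\<in>{a1..<lam}. f b) \<le> (INF b\<in>{max a0 a1..<lam}. g b)"
    by (rule INF_mono) (auto intro: le)
  also have "\<dots> \<le> (SUP a\<in>{..<lam}. INF b\<in>{a..<lam}. g b)"
    by (rule SUP_upper[OF c])
  finally show "(INF b\<in>{a1..<lam}. f b) \<le> (SUP a\<in>{..<lam}. INF b\<in>{a..<lam}. g b)" .
qed

lemma ord_limsup_diagonal_le:
  fixes h :: "'o::wellorder \<Rightarrow> 'o \<Rightarrow> 'l::complete_lattice"
  assumes antitone: "\<And>a a' b. a \<le> a' \<Longrightarrow> h a' b \<le> h a b"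
  shows "ord_limsup lam (\<lambda>b. h b b) \<le> ord_limsup lam (\<lambda>a. ord_limsup lam (\<lambda>b. h a b))"
  unfolding ord_limsup_def [of lam "\<lambda>a. ord_limsup lam (h a)"]
proof (rule INF_greatest)
  fix a0 assume "a0 \<in> {..<lam}"
  then have "ord_limsup lam (\<lambda>b. h b b) \<le> ord_limsup lam (h a0)"
    by (intro ord_limsup_mono_eventually[of a0]) (auto intro: antitone)
  also have "\<dots> \<le> (SUP a\<in>{a0..<lam}. ord_limsup lam (h a))"
    using \<open>a0 \<in> {..<lam}\<close> by (intro SUP_upper) auto
  finally show "ord_limsup lam (\<lambda>b. h b b) \<le> (SUP a\<in>{a0..<lam}. ord_limsup lam (h a))" .
qed

lemma ord_liminf_diagonal_ge:
  fixes h :: "'o::wellorder \<Rightarrow> 'o \<Rightarrow> 'l::complete_lattice"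
  assumes monotone: "\<And>a a' b. a \<le> a' \<Longrightarrow> h a b \<le> h a' b"
  shows "ord_liminf lam (\<lambda>a. ord_liminf lam (\<lambda>b. h a b)) \<le> ord_liminf lam (\<lambda>b. h b b)"
  unfolding ord_liminf_def [of lam "\<lambda>a. ord_liminf lam (h a)"]
proof (rule SUP_least)
  fix a0 assume "a0 \<in> {..<lam}"
  then have "(INF a\<in>{a0..<lam}. ord_liminf lam (h a)) \<le> ord_liminf lam (h a0)"
    by (intro INF_lower) auto
  also have "\<dots> \<le> ord_liminf lam (\<lambda>b. h b b)"
    using \<open>a0 \<in> {..<lam}\<close> by (intro ord_liminf_mono_eventually[of a0]) (auto intro: monotone)
  finally show "(INF a\<in>{a0..<lam}. ord_liminf lam (h a)) \<le> ord_liminf lam (\<lambda>b. h b b)" .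
qed

theorem lemma4p12:
  fixes lam :: "'o::wellorder" and h :: "'o \<Rightarrow> 'o \<Rightarrow> 'l::complete_lattice"
  assumes "is_nonzero_limit lam"
  shows "((\<forall>a a' b. a \<le> a' \<longrightarrow> h a' b \<le> h a b) \<longrightarrow>
           ord_limsup lam (\<lambda>b. h b b) \<le> ord_limsup lam (\<lambda>a. ord_limsup lam (\<lambda>b. h a b)))
       \<and> ((\<forall>a a' b. a \<le> a' \<longrightarrow> h a b \<le> h a' b) \<longrightarrow>
           ord_liminf lam (\<lambda>a. ord_liminf lam (\<lambda>b. h a b)) \<le> ord_liminf lam (\<lambda>b. h b b))"
  using ord_limsup_diagonal_le[of h lam] ord_liminf_diagonal_ge[of h lam] by blast

end
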